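(* Let $\mathbf a=(a_i)_{i\ge0}$ be the fixed point beginning with $0$ of the $5$-uniform morphism $\sigma$ on $\{0,1,2,3,4\}$ defined by $\sigma(0)=00043$, $\sigma(1)=13042$, $\sigma(2)=14201$, $\sigma(3)=32411$, $\sigma(4)=00144$, with letters viewed as elements of $\mathbb{F}_5$, and let $f_{\mathbf a}(T)=\sum_{i\ge0}a_iT^{-i}\in\mathbb{F}_5[[T^{-1}]]$. Then $\mu(f_{\mathbf a})=3.4$.
   Context: The fixed point is $\sigma^\infty(0)=\lim_n\sigma^n(0)=0004300043\cdots$. Fix a real $|T|>1$; $|g|=|T|^{-i_0}$ for $g\in\mathbb{F}_5((T^{-1}))$ with leading term $T^{-i_0}$. The irrationality exponent $\mu(f)$ is the supremum of real $\tau$ such that $|f-P/Q|<|Q|^{-\tau}$ has infinitely many solutions $(P,Q)\in\mathbb{F}_5[T]^2$, $Q\ne0$. *)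

theory Defs
  imports "HOL-Computational_Algebra.Formal_Laurent_Series" "HOL-Library.Extended_Real" "HOL-Library.Cardinality"
begin

text \<open>Laurent series in T^{-1} are represented as 'a fls in the variable X = T^{-1}.
  So the coefficient of T^{-i} is the X^i coefficient.\<close>

fun sigma :: "nat \<Rightarrow> nat list" where
  "sigma 0 = [0,0,0,4,3]"
| "sigma (Suc 0) = [1,3,0,4,2]"
| "sigma (Suc (Suc 0)) = [1,4,2,0,1]"
| "sigma (Suc (Suc (Suc 0))) = [3,2,4,1,1]"
| "sigma (Suc (Suc (Suc (Suc 0)))) = [0,0,1,4,4]"
| "sigma _ = []"

definition is_sigma_fixed_point :: "(nat \<Rightarrow> nat) \<Rightarrow> bool" where
  "is_sigma_fixed_point a \<longleftrightarrow> (\<forall>i. \<forall>j<5. a (5 * i + j) = sigma (a i) ! j)"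

definition poly_T :: "'a::comm_ring_1 poly \<Rightarrow> 'a fls" where
  "poly_T P = (\<Sum>j\<le>degree P. fls_const (coeff P j) * fls_X_inv ^ j)"

definition f_word :: "(nat \<Rightarrow> nat) \<Rightarrow> 'a::comm_ring_1 fls" where
  "f_word a = fps_to_fls (Abs_fps (\<lambda>i. of_nat (a i)))"

definition absT :: "real \<Rightarrow> 'a::zero fls \<Rightarrow> real" where
  "absT T g = (if g = 0 then 0 else \<bar>T\<bar> powr (- real_of_int (fls_subdegree g)))"

definition irr_exp :: "real \<Rightarrow> 'a::field fls \<Rightarrow> ereal" where
  "irr_exp T f = Sup {ereal \<tau> | \<tau>.
     infinite {(P :: 'a poly, Q :: 'a poly). Q \<noteq> 0 \<and>
        absT T (f - poly_T P / poly_T Q) < absT T (poly_T Q) powr (- \<tau>)}}"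

end

theory Submission
  imports Defs "HOL-Computational_Algebra.Polynomial_Factorial"
begin

text \<open>Write \<open>d = 5\<^sup>j\<^sup>+\<^sup>1\<close>. The word \<open>a\<close> agrees with its shift by \<open>d\<close> on the positions \<open>1 \<dots> 12 \<cdot> 5\<^sup>j - 1\<close>
  and not at \<open>12 \<cdot> 5\<^sup>j\<close>, so the periodic series \<open>p\<^sub>j / q\<^sub>j\<close>, \<open>q\<^sub>j = T\<^sup>d - 1\<close>, with period \<open>a\<^sub>1 \<dots> a\<^sub>d\<close> satisfies
  \<open>|f - p\<^sub>j / q\<^sub>j| = |q\<^sub>j|\<^sup>-\<^sup>1\<^sup>7\<^sup>/\<^sup>5\<close>; hence \<open>\<mu> \<ge> 17/5\<close>.
  In characteristic 5 we have \<open>T\<^sup>d - 1 = (T - 1)\<^sup>d\<close>, and \<open>p\<^sub>j(1)\<close> is the letter sum of the prefix of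
  length \<open>d\<close>, which is nonzero modulo 5; so these fractions are reduced. Given \<open>P/Q\<close> with
  \<open>|f - P/Q| < |Q|\<^sup>-\<^sup>\<tau>\<close> and \<open>\<tau> > 17/5\<close>, compare it with the \<open>p\<^sub>j/q\<^sub>j\<close> for which \<open>12 \<cdot> 5\<^sup>j\<close> just exceeds
  \<open>deg Q\<close>: equality forces \<open>deg Q \<ge> d\<close> by reducedness, so the quality is at most \<open>17/5\<close>; otherwise \<open>|P/Q - p\<^sub>j/q\<^sub>j| \<ge> |Q q\<^sub>j|\<^sup>-\<^sup>1\<close>
  together with the ultrametric inequality bounds \<open>deg Q\<close> by 15. So only finitely many
  such fractions exist, and \<open>\<mu> = 17/5\<close>.\<close>

section \<open>Polynomials in \<open>T\<close> as Laurent series in \<open>T\<^sup>-\<^sup>1\<close>\<close>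

lemma fls_nth_poly_T:
  "fls_nth (poly_T (P :: 'a::comm_ring_1 poly)) i = (if i \<le> 0 then coeff P (nat (- i)) else 0)"
proof (cases "i \<le> 0")
  case True
  then have "fls_nth (poly_T P) i = (\<Sum>j\<le>degree P. if j = nat (- i) then coeff P j else 0)"
    unfolding poly_T_def fls_nth_sum by (intro sum.cong) auto
  also have "\<dots> = coeff P (nat (- i))"
    by (auto simp: coeff_eq_0)
  finally show ?thesis
    using True by simp
qed (simp add: poly_T_def fls_nth_sum)

lemma poly_T_inject: "poly_T (P :: 'a::comm_ring_1 poly) = poly_T Q \<longleftrightarrow> P = Q"
proof
  assume "poly_T P = poly_T Q"
  then have "fls_nth (poly_T P) (- int n) = fls_nth (poly_T Q) (- int n)" for n
    by simp
  then show "P = Q"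
    by (intro poly_eqI) (simp add: fls_nth_poly_T)
qed simp

lemma poly_T_0 [simp]: "poly_T (0 :: 'a::comm_ring_1 poly) = 0"
  by (rule fls_eqI) (simp add: fls_nth_poly_T)

lemma poly_T_eq_0_iff [simp]: "poly_T (P :: 'a::comm_ring_1 poly) = 0 \<longleftrightarrow> P = 0"
  using poly_T_inject[of P 0] by simp

lemma poly_T_add: "poly_T (P + Q :: 'a::comm_ring_1 poly) = poly_T P + poly_T Q"
  by (rule fls_eqI) (simp add: fls_nth_poly_T)

lemma poly_T_diff: "poly_T (P - Q :: 'a::comm_ring_1 poly) = poly_T P - poly_T Q"
  by (rule fls_eqI) (simp add: fls_nth_poly_T)

lemma poly_T_smult: "poly_T (smult c P :: 'a::comm_ring_1 poly) = fls_const c * poly_T P"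
  by (rule fls_eqI) (simp add: fls_nth_poly_T)

lemma poly_T_pCons: "poly_T (pCons c P :: 'a::comm_ring_1 poly) = fls_const c + fls_X_inv * poly_T P"
proof (rule fls_eqI)
  fix n
  have "fls_X_inv * poly_T P = fls_shift 1 (poly_T P)"
    using fls_X_inv_power_times_conv_shift(1)[of 1 "poly_T P"] by simp
  then show "fls_nth (poly_T (pCons c P)) n = fls_nth (fls_const c + fls_X_inv * poly_T P) n"
    by (cases "n \<le> 0"; cases "n = 0")
       (auto simp: fls_nth_poly_T coeff_pCons nat_diff_distrib' split: nat.split)
qed

lemma poly_T_mult: "poly_T (P * Q :: 'a::comm_ring_1 poly) = poly_T P * poly_T Q"
proof (induction P)
  case (pCons c P)
  have "poly_T (pCons c P * Q) = poly_T (smult c Q + pCons 0 (P * Q))"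
    by simp
  also have "\<dots> = poly_T (pCons c P) * poly_T Q"
    by (simp add: poly_T_add poly_T_smult poly_T_pCons pCons.IH algebra_simps)
  finally show ?case .
qed simp

lemma fls_subdegree_poly_T:
  "P \<noteq> 0 \<Longrightarrow> fls_subdegree (poly_T (P :: 'a::comm_ring_1 poly)) = - int (degree P)"
  by (rule fls_subdegree_eqI) (auto simp: fls_nth_poly_T coeff_eq_0)

lemma poly_T_monom_minus_1: "poly_T (monom 1 d - 1 :: 'a::comm_ring_1 poly) = fls_X_inv ^ d - 1"
  by (rule fls_eqI) (auto simp: fls_nth_poly_T fls_X_inv_power_nth)

section \<open>Fields of prime characteristic\<close>

text \<open>Translation by 1 permutes a finite ring, so it preserves the sum of all elements.\<close>
lemma of_nat_CARD_eq_0: "of_nat CARD('a) = (0 :: 'a::ring_1)"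
proof (cases "finite (UNIV :: 'a set)")
  case True
  have "(\<Sum>x\<in>UNIV. x + 1) = (\<Sum>x\<in>(UNIV :: 'a set). x)"
    by (rule sum.reindex_bij_witness[where i = "\<lambda>x. x - 1" and j = "\<lambda>x. x + 1"]) auto
  then show ?thesis
    using True by (simp add: sum.distrib)
qed simp

lemma CHAR_eq_5_of_card: "CARD('a::field) = 5 \<Longrightarrow> CHAR('a) = 5"
  using of_nat_CARD_eq_0[where 'a = 'a] of_nat_eq_0_iff_char_dvd[of 5] CHAR_not_1'[where 'a = 'a]
    prime_nat_iff[of 5] by auto

lemma linear_power_CHAR_pow:
  assumes "prime CHAR('a::field)"
  shows "[:-1, 1:] ^ (CHAR('a) ^ n) = (monom 1 (CHAR('a) ^ n) - 1 :: 'a poly)"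
proof -
  have prime: "prime CHAR('a poly)"
    using assms by simp
  have "(1 + (-1)) ^ (CHAR('a) ^ n) = 1 ^ (CHAR('a) ^ n) + (-1 :: 'a poly) ^ (CHAR('a) ^ n)"
    by (rule freshmans_dream'[OF prime]) simp
  \<comment> \<open>hence \<open>(-1)^(p^n) = -1\<close>, also in characteristic 2\<close>
  then have minus_one: "(-1 :: 'a poly) ^ (CHAR('a) ^ n) = -1"
    using assms prime_gt_0_nat by (simp add: power_0_left add_eq_0_iff)
  have "[:-1, 1:] ^ (CHAR('a) ^ n) = ([:0, 1:] + (-1 :: 'a poly)) ^ (CHAR('a) ^ n)"
    by (simp add: one_pCons)
  also have "\<dots> = [:0, 1:] ^ (CHAR('a) ^ n) + (-1) ^ (CHAR('a) ^ n)"
    by (rule freshmans_dream'[OF prime]) simp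
  finally show ?thesis
    by (simp add: minus_one monom_altdef)
qed

text \<open>The hypothesis says \<open>p / (T\<^sup>d - 1) = P / Q\<close>. As \<open>T\<^sup>d - 1 = (T - 1)\<^sup>d\<close> for \<open>d\<close> a power of the
  characteristic, the left fraction is in lowest terms when \<open>p(1) \<noteq> 0\<close>, so \<open>(T - 1)\<^sup>d\<close> divides \<open>Q\<close>.\<close>
lemma CHAR_pow_le_degree_of_cross_eq:
  fixes P p Q :: "'a::field poly"
  assumes "prime CHAR('a)" "poly p 1 \<noteq> 0" "Q \<noteq> 0"
    and "P * (monom 1 (CHAR('a) ^ n) - 1) = p * Q"
  shows "CHAR('a) ^ n \<le> degree Q"
proof -
  have "prime_elem [:-1, 1 :: 'a:]"
    by (rule prime_elem_linear_field_poly) simp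
  moreover have "[:-1, 1:] ^ (CHAR('a) ^ n) dvd p * Q"
    using assms(4) by (metis dvd_triv_right linear_power_CHAR_pow[OF assms(1)])
  moreover have "0 < CHAR('a) ^ n"
    using assms(1) prime_gt_0_nat by simp
  moreover have "\<not> [:-1, 1:] dvd p"
    using assms(2) poly_eq_0_iff_dvd[of p 1] by simp
  ultimately have "[:-1, 1:] ^ (CHAR('a) ^ n) dvd Q"
    by (rule prime_power_dvd_multD)
  then have "degree ([:-1, 1 :: 'a:] ^ (CHAR('a) ^ n)) \<le> degree Q"
    using assms(3) by (rule dvd_imp_degree_le)
  then show ?thesis
    by (simp add: degree_linear_power)
qed

section \<open>Good rational approximations\<close>

lemma finite_polys_degree_le:
  assumes "finite (UNIV :: 'a set)"
  shows "finite {P :: 'a::zero poly. degree P \<le> N}"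
proof -
  have "{P :: 'a poly. degree P \<le> N} \<subseteq> Poly ` {xs. set xs \<subseteq> UNIV \<and> length xs \<le> Suc N}"
  proof
    fix P :: "'a poly"
    assume "P \<in> {P. degree P \<le> N}"
    then have "length (coeffs P) \<le> Suc N"
      by (cases "P = 0") (simp_all add: length_coeffs_degree)
    then show "P \<in> Poly ` {xs. set xs \<subseteq> UNIV \<and> length xs \<le> Suc N}"
      by (intro image_eqI[of _ _ "coeffs P"]) simp_all
  qed
  then show ?thesis
    using finite_lists_length_le[OF assms] finite_surj by blast
qed

definition good_approximations :: "real \<Rightarrow> 'a::field fls \<Rightarrow> real \<Rightarrow> ('a poly \<times> 'a poly) set" where
  "good_approximations T f \<tau> = {(P, Q). Q \<noteq> 0 \<and>
     absT T (f - poly_T P / poly_T Q) < absT T (poly_T Q) powr (- \<tau>)}"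

lemma irr_exp_eqI:
  assumes "\<And>\<tau>. \<tau> < c \<Longrightarrow> infinite (good_approximations T f \<tau>)"
    and "\<And>\<tau>. c < \<tau> \<Longrightarrow> finite (good_approximations T f \<tau>)"
  shows "irr_exp T f = ereal c"
proof -
  let ?M = "{ereal \<tau> | \<tau>. infinite (good_approximations T f \<tau>)}"
  have "irr_exp T f = Sup ?M"
    by (simp add: irr_exp_def good_approximations_def)
  also have "Sup ?M = ereal c"
  proof (rule antisym)
    show "Sup ?M \<le> ereal c"
    proof (rule Sup_least)
      fix x
      assume "x \<in> ?M"
      then obtain \<tau> where "x = ereal \<tau>" "infinite (good_approximations T f \<tau>)"
        by blast
      then show "x \<le> ereal c"
        using assms(2)[of \<tau>] by force
    qed
  next
    show "ereal c \<le> Sup ?M"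
    proof (rule ccontr)
      assume "\<not> ereal c \<le> Sup ?M"
      then have "Sup ?M < ereal c"
        by simp
      then obtain r where "Sup ?M < ereal r" "r < c"
        using ereal_dense2 by fastforce
      then show False
        using assms(1)[of r] Sup_upper[of "ereal r" ?M] by auto
    qed
  qed
  finally show ?thesis .
qed

lemma mem_good_approximations_iff:
  fixes f :: "'a::field fls"
  assumes "\<bar>T\<bar> > 1"
  shows "(P, Q) \<in> good_approximations T f \<tau> \<longleftrightarrow> Q \<noteq> 0 \<and>
    (f = poly_T P / poly_T Q \<or> \<tau> * degree Q < fls_subdegree (f - poly_T P / poly_T Q))"
proof (cases "Q = 0")
  case False
  have "absT T (poly_T Q) powr (- \<tau>) = \<bar>T\<bar> powr (- \<tau> * degree Q)"
    using False assms by (simp add: absT_def fls_subdegree_poly_T powr_powr mult.commute)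
  moreover have "\<bar>T\<bar> powr x < \<bar>T\<bar> powr y \<longleftrightarrow> x < y" for x y
    using assms by simp
  ultimately show ?thesis
    using False assms by (auto simp: good_approximations_def absT_def)
qed (simp add: good_approximations_def)

lemma fls_subdegree_diff_fractions_le:
  fixes P Q p q :: "'a::field poly"
  assumes "Q \<noteq> 0" "q \<noteq> 0" "poly_T P / poly_T Q \<noteq> poly_T p / poly_T q"
  shows "fls_subdegree (poly_T P / poly_T Q - poly_T p / poly_T q) \<le> int (degree Q + degree q)"
proof -
  define D where "D = poly_T P / poly_T Q - poly_T p / poly_T q"
  have "D * poly_T (Q * q) = poly_T (P * q - p * Q)"
    using assms(1,2) by (simp add: D_def poly_T_diff poly_T_mult field_simps)
  moreover have "D \<noteq> 0"
    using assms(3) by (simp add: D_def)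
  moreover have "P * q - p * Q \<noteq> 0"
    using calculation assms(1,2) by auto
  ultimately have "fls_subdegree D + fls_subdegree (poly_T (Q * q)) = - int (degree (P * q - p * Q))"
    using assms(1,2) by (metis fls_subdegree_mult fls_subdegree_poly_T poly_T_eq_0_iff mult_eq_0_iff)
  moreover have "fls_subdegree (poly_T (Q * q)) = - int (degree Q + degree q)"
    using assms(1,2) by (simp add: fls_subdegree_poly_T degree_mult_eq)
  ultimately show ?thesis
    by (simp add: D_def)
qed

lemma degree_le_of_fls_subdegree_nonneg:
  fixes P Q :: "'a::field poly"
  assumes "Q \<noteq> 0" "0 \<le> fls_subdegree f" "0 \<le> fls_subdegree (f - poly_T P / poly_T Q)"
  shows "degree P \<le> degree Q"
proof (cases "P = 0")
  case False
  define S where "S = poly_T P / poly_T Q"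
  have "S \<noteq> 0"
    using assms(1) False by (simp add: S_def)
  then have "min (fls_subdegree f) (fls_subdegree (f - S)) \<le> fls_subdegree (f - (f - S))"
    by (intro fls_subdegree_minus) simp
  then have "0 \<le> fls_subdegree S"
    using assms(2,3) by (simp add: S_def)
  moreover have "fls_subdegree S + fls_subdegree (poly_T Q) = fls_subdegree (poly_T P)"
  proof -
    have "S * poly_T Q = poly_T P"
      using assms(1) by (simp add: S_def)
    then show ?thesis
      using \<open>S \<noteq> 0\<close> assms(1) fls_subdegree_mult[of S "poly_T Q"] by simp
  qed
  ultimately show ?thesis
    using assms(1) False by (simp add: fls_subdegree_poly_T)
qed simp

section \<open>The fixed point of \<open>sigma\<close>\<close>

lemma sigma_letters: "sigma 0 = [0,0,0,4,3]" "sigma 1 = [1,3,0,4,2]" "sigma 2 = [1,4,2,0,1]"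
  "sigma 3 = [3,2,4,1,1]" "sigma 4 = [0,0,1,4,4]"
  by (simp_all add: numeral_eq_Suc)

lemma sum_lessThan_mult_split:
  fixes f :: "nat \<Rightarrow> 'a::comm_monoid_add"
  shows "(\<Sum>y<k * m. f y) = (\<Sum>y<m. \<Sum>t<k. f (k * y + t))"
proof -
  have "(\<Sum>y<k * m. f y) = (\<Sum>y<m. sum f {y * k..<y * k + k})"
    using sum.nat_group[of f k m] by (simp add: mult.commute)
  also have "\<dots> = (\<Sum>y<m. \<Sum>t<k. f (k * y + t))"
  proof -
    have "sum f {y * k..<y * k + k} = (\<Sum>t<k. f (k * y + t))" for y
      using sum.shift_bounds_nat_ivl[of f 0 "y * k" k] by (simp add: atLeast0LessThan add.commute mult.commute)
    then show ?thesis
      by simp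
  qed
  finally show ?thesis .
qed

text \<open>\<open>(sigma_sum ^^ k) h c\<close> is the sum of \<open>h\<close> over the letters of \<open>sigma\<^sup>k(c)\<close>.\<close>
definition sigma_sum :: "(nat \<Rightarrow> nat) \<Rightarrow> nat \<Rightarrow> nat" where
  "sigma_sum h c = (\<Sum>t<5. h (sigma c ! t))"

lemma sum_lessThan_5:
  fixes g :: "nat \<Rightarrow> 'a::comm_monoid_add"
  shows "(\<Sum>t<5. g t) = g 0 + g 1 + g 2 + g 3 + g 4"
  by (simp add: eval_nat_numeral add.assoc)

lemma sigma_sum_id_mod_5:
  assumes "c < 5"
  shows "(sigma_sum ^^ Suc k) id c mod 5 = [[2,0,3,1,4], [1,0,4,3,2], [3,0,2,4,1], [4,0,1,2,3]] ! (k mod 4) ! c"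
  using assms
proof (induction k arbitrary: c)
  case 0
  then have "c \<in> set [0..<5]"
    by simp
  then show ?case
    by (simp add: upt_rec del: upt_Suc) (elim disjE; simp add: sigma_sum_def sum_lessThan_5 sigma_letters)
next
  case (Suc k)
  have letters: "sigma c ! t < 5" if "t < 5" for t
    using Suc.prems that by (auto simp: sigma_letters less_Suc_eq numeral_eq_Suc)
  have "(sigma_sum ^^ Suc (Suc k)) id c mod 5 = (\<Sum>t<5. (sigma_sum ^^ Suc k) id (sigma c ! t) mod 5) mod 5"
    unfolding funpow.simps(2) o_apply sigma_sum_def by (rule mod_sum_eq[symmetric])
  also have "\<dots> = (\<Sum>t<5. [[2,0,3,1,4], [1,0,4,3,2], [3,0,2,4,1], [4,0,1,2,3::nat]] ! (k mod 4) ! (sigma c ! t)) mod 5"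
    using Suc.IH letters by (simp add: id_def)
  also have "\<dots> = [[2,0,3,1,4], [1,0,4,3,2], [3,0,2,4,1], [4,0,1,2,3]] ! (Suc k mod 4) ! c"
  proof -
    have "k mod 4 \<in> set [0..<4]" "c \<in> set [0..<5]"
      using Suc.prems by simp_all
    moreover have "Suc k mod 4 = (if k mod 4 = 3 then 0 else Suc (k mod 4))"
      by (simp add: mod_Suc)
    ultimately show ?thesis
      by (simp add: upt_rec del: upt_Suc) (elim disjE; simp add: sum_lessThan_5 sigma_letters)
  qed
  finally show ?case .
qed

locale sigma_fixed_word =
  fixes a :: "nat \<Rightarrow> nat"
  assumes fixed: "is_sigma_fixed_point a" and a_0: "a 0 = 0"
begin

lemma a_block: "j < 5 \<Longrightarrow> a (5 * i + j) = sigma (a i) ! j"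
  using fixed unfolding is_sigma_fixed_point_def by blast

lemma a_prefix: "m < 18 \<Longrightarrow> a m = [0,0,0,4,3, 0,0,0,4,3, 0,0,0,4,3, 0,0,1] ! m"
proof -
  assume "m < 18"
  have "a (m div 5) = sigma 0 ! (m div 5)"
    using a_block[of "m div 5" 0] a_0 \<open>m < 18\<close> by simp
  then have "a m = sigma (sigma 0 ! (m div 5)) ! (m mod 5)"
    using a_block[of "m mod 5" "m div 5"] by simp
  moreover have "m \<in> set [0..<18]"
    using \<open>m < 18\<close> by simp
  ultimately show ?thesis
    by (simp add: upt_rec sigma_letters del: upt_Suc) (elim disjE; simp add: sigma_letters)
qed

lemma a_periodic: "m < 12 * 5 ^ j \<Longrightarrow> a (m + 5 ^ Suc j) = a m"
proof (induction j arbitrary: m)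
  case 0
  then have "m \<in> set [0..<12]"
    by simp
  then show ?case
    by (simp add: upt_rec del: upt_Suc) (elim disjE; simp add: a_prefix)
next
  case (Suc j)
  define q r where "q = m div 5" and "r = m mod 5"
  have m: "m = 5 * q + r" and "r < 5"
    by (simp_all add: q_def r_def)
  have "q < 12 * 5 ^ j"
    using Suc.prems m by simp
  have "a (m + 5 ^ Suc (Suc j)) = a (5 * (q + 5 ^ Suc j) + r)"
    by (simp add: m algebra_simps)
  also have "\<dots> = sigma (a (q + 5 ^ Suc j)) ! r"
    using \<open>r < 5\<close> by (rule a_block)
  also have "\<dots> = sigma (a q) ! r"
    using Suc.IH \<open>q < 12 * 5 ^ j\<close> by simp
  also have "\<dots> = a m"
    using a_block[OF \<open>r < 5\<close>, of q] m by simp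
  finally show ?case .
qed

lemma a_mult_pow5: "a x \<in> {0, 1} \<Longrightarrow> a (5 ^ j * x) = a x"
proof (induction j)
  case (Suc j)
  then show ?case
    using a_block[of 0 "5 ^ j * x"] by (auto simp: mult.assoc sigma_letters)
qed simp

lemma sum_block_eq_sigma_sum:
  "(\<Sum>y<5 ^ k. h (a (5 ^ k * x + y))) = (sigma_sum ^^ k) h (a x)"
proof (induction k arbitrary: h)
  case (Suc k)
  have "(\<Sum>y<5 ^ Suc k. h (a (5 ^ Suc k * x + y))) = (\<Sum>y<5 ^ k. \<Sum>t<5. h (a (5 ^ Suc k * x + (5 * y + t))))"
    using sum_lessThan_mult_split[where k = 5 and m = "5 ^ k"] by simp
  also have "\<dots> = (\<Sum>y<5 ^ k. sigma_sum h (a (5 ^ k * x + y)))"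
    unfolding sigma_sum_def
  proof (intro sum.cong refl)
    fix y t :: nat
    assume "t \<in> {..<5}"
    then have "a (5 * (5 ^ k * x + y) + t) = sigma (a (5 ^ k * x + y)) ! t"
      by (intro a_block) simp
    then show "h (a (5 ^ Suc k * x + (5 * y + t))) = h (sigma (a (5 ^ k * x + y)) ! t)"
      by (simp add: algebra_simps)
  qed
  also have "\<dots> = (sigma_sum ^^ Suc k) h (a x)"
    by (simp add: Suc.IH funpow_Suc_right del: funpow.simps)
  finally show ?case .
qed simp

lemma prefix_sum_mod_5_ne_0: "(\<Sum>i<5 ^ Suc j. a i) mod 5 \<noteq> 0"
proof -
  have "(\<Sum>i<5 ^ Suc j. a i) = (sigma_sum ^^ Suc j) id 0"
    using sum_block_eq_sigma_sum[where k = "Suc j" and h = id and x = 0] a_0 by simp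
  then have "(\<Sum>i<5 ^ Suc j. a i) mod 5 = [[2,0,3,1,4], [1,0,4,3,2], [3,0,2,4,1], [4,0,1,2,3]] ! (j mod 4) ! 0"
    using sigma_sum_id_mod_5[of 0 j] by simp
  moreover have "j mod 4 \<in> set [0..<4]"
    by simp
  ultimately show ?thesis
    by (simp add: upt_rec del: upt_Suc) (elim disjE; simp)
qed

end

section \<open>Periodic approximations\<close>

definition periodic_den :: "nat \<Rightarrow> 'a::comm_ring_1 poly" where
  "periodic_den d = monom 1 d - 1"

lemma degree_periodic_den: "0 < d \<Longrightarrow> degree (periodic_den d :: 'a::comm_ring_1 poly) = d"
  unfolding periodic_den_def diff_conv_add_uminus
  by (subst degree_add_eq_left) (simp_all add: degree_monom_eq)

lemma periodic_den_ne_0: "0 < d \<Longrightarrow> periodic_den d \<noteq> (0 :: 'a::comm_ring_1 poly)"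
  using degree_periodic_den[of d, where 'a = 'a] by auto

lemma exists_pow5_bracket: "\<exists>j. n < 12 * 5 ^ j \<and> 12 * 5 ^ Suc j \<le> 25 * n + (60 :: nat)"
proof -
  have "\<exists>j. n < 12 * 5 ^ j"
  proof
    have "n < 2 ^ n"
      by (rule less_exp)
    also have "(2 :: nat) ^ n \<le> 5 ^ n"
      by (rule power_mono) simp_all
    finally show "n < 12 * 5 ^ n"
      by simp
  qed
  define j where "j = (LEAST j. n < 12 * 5 ^ j)"
  have "n < 12 * 5 ^ j"
    unfolding j_def by (rule LeastI_ex) fact
  moreover have "12 * 5 ^ Suc j \<le> 25 * n + 60"
  proof (cases j)
    case (Suc i)
    then have "\<not> n < 12 * 5 ^ i"
      using not_less_Least[of i "\<lambda>j. n < 12 * 5 ^ j"] by (simp add: j_def)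
    then show ?thesis
      using Suc by simp
  qed simp
  ultimately show ?thesis
    by blast
qed

context sigma_fixed_word
begin

text \<open>\<open>periodic_num d / periodic_den d\<close> is the purely periodic series with period \<open>a\<^sub>1 \<dots> a\<^sub>d\<close>.\<close>
definition periodic_num :: "nat \<Rightarrow> 'b::comm_ring_1 poly" where
  "periodic_num d = (\<Sum>k<d. monom (of_nat (a (d - k))) k)"

lemma fls_nth_periodic_remainder:
  "fls_nth (poly_T (periodic_den d) * f_word a - poly_T (periodic_num d) :: 'b::comm_ring_1 fls) i =
     (if 0 < i then of_nat (a (nat i + d)) - of_nat (a (nat i)) else 0)"
proof -
  have shift: "poly_T (periodic_den d) * (f_word a :: 'b fls) = fls_shift (int d) (f_word a) - f_word a"
    by (simp add: periodic_den_def poly_T_monom_minus_1 algebra_simps fls_X_inv_power_times_conv_shift)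
  have coeff_num: "coeff (periodic_num d :: 'b poly) k = (if k < d then of_nat (a (d - k)) else 0)" for k
    unfolding periodic_num_def coeff_sum by (simp add: coeff_monom)
  consider "0 < i" | "i \<le> 0" "nat (- i) < d" | "i \<le> 0" "d \<le> nat (- i)"
    by linarith
  then show ?thesis
  proof cases
    case 1
    then show ?thesis
      unfolding shift by (simp add: f_word_def fls_nth_poly_T nat_add_distrib)
  next
    case 2
    then have "nat (i + int d) = d - nat (- i)"
      by linarith
    with 2 show ?thesis
      unfolding shift using a_0 by (simp add: f_word_def fls_nth_poly_T coeff_num)
  next
    case 3
    then show ?thesis
      unfolding shift using a_0 by (auto simp: f_word_def fls_nth_poly_T coeff_num)
  qed
qed

lemma periodic_remainder_subdegree:
  fixes j :: nat
  defines "g \<equiv> poly_T (periodic_den (5 ^ Suc j)) * f_word a - poly_T (periodic_num (5 ^ Suc j)) :: 'b::comm_ring_1 fls"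
  shows "g \<noteq> 0" "fls_subdegree g = int (12 * 5 ^ j)"
proof -
  have coeff_g: "fls_nth g (int m) = (if 0 < m then of_nat (a (m + 5 ^ Suc j)) - of_nat (a m) else 0)" for m
    unfolding g_def fls_nth_periodic_remainder by simp
  have below: "fls_nth g i = 0" if "i < int (12 * 5 ^ j)" for i
    using a_periodic[of "nat i" j] that unfolding g_def fls_nth_periodic_remainder by (auto simp: nat_less_iff)
  have "a (12 * 5 ^ j + 5 ^ Suc j) = a (5 ^ j * 17)"
    by (simp add: algebra_simps)
  also have "\<dots> = 1"
    using a_mult_pow5[of 17 j] a_prefix[of 17] by simp
  finally have "fls_nth g (int (12 * 5 ^ j)) = 1"
    using coeff_g[of "12 * 5 ^ j"] a_mult_pow5[of 12 j] a_prefix[of 12] by (simp add: mult.commute)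
  then show "g \<noteq> 0" "fls_subdegree g = int (12 * 5 ^ j)"
    using below by (auto intro: fls_subdegree_eqI)
qed

lemma fls_subdegree_f_word_minus_periodic:
  fixes j :: nat
  defines "R \<equiv> poly_T (periodic_num (5 ^ Suc j)) / poly_T (periodic_den (5 ^ Suc j)) :: 'b::field fls"
  shows "f_word a - R \<noteq> 0" "fls_subdegree (f_word a - R) = int (17 * 5 ^ j)"
proof -
  let ?q = "poly_T (periodic_den (5 ^ Suc j)) :: 'b fls"
  have "?q \<noteq> 0"
    by (simp add: periodic_den_ne_0)
  then have "(f_word a - R) * ?q = ?q * f_word a - poly_T (periodic_num (5 ^ Suc j))"
    by (simp add: R_def field_simps)
  with periodic_remainder_subdegree[where 'b = 'b and j = j]
  have remainder: "(f_word a - R) * ?q \<noteq> 0" "fls_subdegree ((f_word a - R) * ?q) = int (12 * 5 ^ j)"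
    by simp_all
  then show "f_word a - R \<noteq> 0"
    by auto
  moreover have "fls_subdegree ?q = - int (5 ^ Suc j)"
    by (simp add: fls_subdegree_poly_T periodic_den_ne_0 degree_periodic_den)
  ultimately show "fls_subdegree (f_word a - R) = int (17 * 5 ^ j)"
    using remainder(2) \<open>?q \<noteq> 0\<close> by simp
qed

lemma poly_periodic_num_1_ne_0:
  assumes "CHAR('b::field) = 5"
  shows "poly (periodic_num (5 ^ Suc j)) (1 :: 'b) \<noteq> 0"
proof -
  let ?d = "5 ^ Suc j :: nat"
  have "poly (periodic_num ?d) (1 :: 'b) = of_nat (\<Sum>k<?d. a (?d - k))"
    unfolding periodic_num_def by (simp add: poly_sum poly_monom)
  also have "(\<Sum>k<?d. a (?d - k)) = (\<Sum>i<?d. a (Suc i))"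
    using sum.nat_diff_reindex[of "\<lambda>i. a (Suc i)" ?d] by (simp add: Suc_diff_Suc)
  also have "\<dots> = (\<Sum>i<Suc ?d. a i)"
    by (subst sum.lessThan_Suc_shift) (simp add: a_0)
  also have "\<dots> = (\<Sum>i<?d. a i)"
    using a_mult_pow5[of 1 "Suc j"] a_prefix[of 1] by simp
  finally show ?thesis
    using assms prefix_sum_mod_5_ne_0[of j] of_nat_eq_0_iff_char_dvd[of "\<Sum>i<?d. a i", where 'a = 'b]
    by (simp add: dvd_eq_mod_eq_0)
qed

lemma infinite_good_approximations:
  assumes "\<bar>T\<bar> > 1" "\<tau> < 17 / 5"
  shows "infinite (good_approximations T (f_word a :: 'b::field fls) \<tau>)"
proof -
  let ?approx = "\<lambda>j. (periodic_num (5 ^ Suc j) :: 'b poly, periodic_den (5 ^ Suc j) :: 'b poly)"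
  have "?approx j \<in> good_approximations T (f_word a) \<tau>" for j
  proof -
    have "\<tau> * real (5 ^ Suc j) < 17 / 5 * real (5 ^ Suc j)"
      using assms(2) by (intro mult_strict_right_mono) auto
    then show ?thesis
      using fls_subdegree_f_word_minus_periodic(2)[where 'b = 'b and j = j]
      by (simp add: mem_good_approximations_iff[OF assms(1)] periodic_den_ne_0 degree_periodic_den)
  qed
  then have "range ?approx \<subseteq> good_approximations T (f_word a) \<tau>"
    by blast
  moreover have "inj ?approx"
  proof (rule injI)
    fix i j
    assume "?approx i = ?approx j"
    then have "degree (periodic_den (5 ^ Suc i) :: 'b poly) = degree (periodic_den (5 ^ Suc j) :: 'b poly)"
      by simp
    then show "i = j"
      by (simp add: degree_periodic_den)
  qed
  then have "infinite (range ?approx)"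
    by (simp add: finite_image_iff)
  ultimately show ?thesis
    using finite_subset by blast
qed

text \<open>Either \<open>P/Q\<close> is the \<open>j\<close>-th periodic approximation, which needs a large denominator, or the
  distance \<open>|P/Q - p\<^sub>j/q\<^sub>j| \<ge> |Q q\<^sub>j|\<^sup>-\<^sup>1\<close> exceeds \<open>|f - p\<^sub>j/q\<^sub>j|\<close> and so bounds \<open>|f - P/Q|\<close> from below.\<close>
lemma fraction_vs_periodic_approx:
  fixes P Q :: "'b::field poly"
  assumes "CHAR('b) = 5" "Q \<noteq> 0" "degree Q < 12 * 5 ^ j"
  defines "S \<equiv> poly_T P / poly_T Q"
    and "R \<equiv> poly_T (periodic_num (5 ^ Suc j)) / poly_T (periodic_den (5 ^ Suc j))"
  shows "S = R \<and> 5 ^ Suc j \<le> degree Q \<or>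
    f_word a \<noteq> S \<and> fls_subdegree (f_word a - S) \<le> int (degree Q + 5 ^ Suc j)"
proof (cases "S = R")
  case True
  then have "P * periodic_den (5 ^ Suc j) = periodic_num (5 ^ Suc j) * Q"
    using assms(2) by (simp add: S_def R_def periodic_den_ne_0 frac_eq_eq poly_T_inject flip: poly_T_mult)
  then have "CHAR('b) ^ Suc j \<le> degree Q"
    using assms(1,2) poly_periodic_num_1_ne_0[OF assms(1)]
    by (intro CHAR_pow_le_degree_of_cross_eq) (simp_all add: periodic_den_def)
  then show ?thesis
    using True assms(1) by simp
next
  case False
  have "fls_subdegree (S - R) \<le> int (degree Q + 5 ^ Suc j)"
    using fls_subdegree_diff_fractions_le[OF assms(2) periodic_den_ne_0 False[unfolded S_def R_def]]
    by (simp add: S_def R_def degree_periodic_den)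
  also have "\<dots> < int (17 * 5 ^ j)"
    using assms(3) by (simp only: of_nat_less_iff) simp
  also have "\<dots> = fls_subdegree (f_word a - R)"
    using fls_subdegree_f_word_minus_periodic(2)[where 'b = 'b and j = j] by (simp add: R_def)
  finally have less: "fls_subdegree (S - R) < fls_subdegree (f_word a - R)" .
  have "f_word a \<noteq> S"
    using less by auto
  moreover have "min (fls_subdegree (f_word a - R)) (fls_subdegree (f_word a - S)) \<le> fls_subdegree (S - R)"
    using fls_subdegree_minus[of "f_word a - R" "f_word a - S"] False by simp
  ultimately show ?thesis
    using less \<open>fls_subdegree (S - R) \<le> _\<close> by linarith
qed

lemma degree_le_15_of_good_approximation:
  fixes P Q :: "'b::field poly"
  assumes "CHAR('b) = 5" "\<bar>T\<bar> > 1" "17 / 5 < \<tau>"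
    and good: "(P, Q) \<in> good_approximations T (f_word a) \<tau>"
  shows "degree Q \<le> 15"
proof -
  define n where "n = degree Q"
  define S where "S = poly_T P / poly_T Q"
  have "Q \<noteq> 0" and close: "f_word a = S \<or> \<tau> * n < fls_subdegree (f_word a - S)"
    using good by (simp_all add: mem_good_approximations_iff[OF assms(2)] S_def n_def)
  obtain j where j: "n < 12 * 5 ^ j" "12 * 5 ^ Suc j \<le> 25 * n + 60"
    using exists_pow5_bracket by blast
  from fraction_vs_periodic_approx[OF assms(1) \<open>Q \<noteq> 0\<close>, of j P] j(1)
  consider "S = poly_T (periodic_num (5 ^ Suc j)) / poly_T (periodic_den (5 ^ Suc j))" "5 ^ Suc j \<le> n"
    | "f_word a \<noteq> S" "fls_subdegree (f_word a - S) \<le> int (n + 5 ^ Suc j)"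
    unfolding S_def n_def by blast
  then show ?thesis
  proof cases
    case 1
    have "real (5 ^ Suc j) \<le> n"
      using 1(2) by (simp only: of_nat_le_iff)
    then have "17 / 5 * real (5 ^ Suc j) < \<tau> * n"
      using assms(3) by (intro mult_less_le_imp_less) simp_all
    moreover have "\<tau> * n < 17 * 5 ^ j"
      using close 1(1) fls_subdegree_f_word_minus_periodic[where 'b = 'b and j = j] by auto
    ultimately show ?thesis
      by simp
  next
    case 2
    have "17 / 5 * n \<le> \<tau> * n"
      using assms(3) by (intro mult_right_mono) simp_all
    also have "\<dots> < n + 5 ^ Suc j"
      using close 2 by linarith
    finally have "17 / 5 * n < n + real (5 ^ Suc j)"
      by simp
    moreover have "12 * real (5 ^ Suc j) \<le> 25 * n + 60"
      using j(2) by (simp only: of_nat_le_iff [symmetric])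
    ultimately show ?thesis
      unfolding n_def by linarith
  qed
qed

lemma finite_good_approximations:
  assumes "finite (UNIV :: 'b::field set)" "CHAR('b) = 5" "\<bar>T\<bar> > 1" "17 / 5 < \<tau>"
  shows "finite (good_approximations T (f_word a :: 'b fls) \<tau>)"
proof -
  have "degree P \<le> 15 \<and> degree Q \<le> 15" if good: "(P, Q) \<in> good_approximations T (f_word a) \<tau>"
    for P Q :: "'b poly"
  proof -
    have "degree Q \<le> 15"
      by (rule degree_le_15_of_good_approximation[OF assms(2-4) good])
    moreover have "degree P \<le> degree Q"
    proof (rule degree_le_of_fls_subdegree_nonneg)
      show "Q \<noteq> 0" "0 \<le> fls_subdegree (f_word a)"
        using good by (simp_all add: good_approximations_def f_word_def fls_subdegree_fls_to_fps_gt0)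
      have "f_word a = poly_T P / poly_T Q \<or> \<tau> * degree Q < fls_subdegree (f_word a - poly_T P / poly_T Q)"
        using good by (simp add: mem_good_approximations_iff[OF assms(3)])
      moreover have "0 \<le> \<tau> * degree Q"
        using assms(4) by simp
      ultimately show "0 \<le> fls_subdegree (f_word a - poly_T P / poly_T Q)"
        by auto
    qed
    ultimately show ?thesis
      by simp
  qed
  then have "good_approximations T (f_word a :: 'b fls) \<tau> \<subseteq> {P. degree P \<le> 15} \<times> {Q. degree Q \<le> 15}"
    by auto
  then show ?thesis
    using finite_polys_degree_le[OF assms(1)] by (meson finite_SigmaI finite_subset)
qed

end

theorem proposition5p9:
  fixes a :: "nat \<Rightarrow> nat" and T :: real
  assumes "CARD('a) = 5"
    and "\<bar>T\<bar> > 1"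
    and "is_sigma_fixed_point a"
    and "a 0 = 0"
  shows "irr_exp T (f_word a :: 'a::field fls) = ereal (17 / 5)"
proof -
  interpret sigma_fixed_word a
    using assms(3,4) by unfold_locales
  have "finite (UNIV :: 'a set)"
    using assms(1) card_ge_0_finite by force
  show ?thesis
    using infinite_good_approximations[OF assms(2)]
      finite_good_approximations[OF \<open>finite UNIV\<close> CHAR_eq_5_of_card[OF assms(1)] assms(2)]
    by (rule irr_exp_eqI)
qed

end
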